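(* Assume (A2) and (A4). There is a constant $C>0$ such that for $n$ large enough and every $m\le M_n$ (equivalently, every index set $\widehat J_m$ with $|\widehat J_m|=m\le M_n$), \[\big|\|(I-\Pi_m)f^*\|_n^2-\|(I-\Pi_m)f^*\|_{L^2}^2\big|\le C\,D_n\cdot\begin{cases}(s+m)\|(I-\Pi_m)f^*\|_{L^2}^2, & \text{under (A2)(i)},\\ \big(\|(I-\Pi_m)f^*\|_{L^2}^2\big)^{\frac{2\gamma-2}{2\gamma-1}}, & \text{under (A2)(ii)},\end{cases}\] where $D_n=\sup_{j,k\le p}|\langle g_j,g_k\rangle_n-\langle g_j,g_k\rangle_{L^2}|$.
   Context: Model: for each $n$, $Y_i=f^*(X_i)+\varepsilon_i$, $f^*(x)=\sum_{j=1}^p\beta^*_jx^{(j)}$, rows $X_i\in\mathbb R^p$ i.i.d., $p=p^{(n)}\to\infty$, $\log(p)/n\to0$. $g_j(x)=x^{(j)}$; $\langle f,g\rangle_n=n^{-1}\sum_if(X_i)g(X_i)$ and $\|\cdot\|_n$; $\langle f,g\rangle_{L^2}=\mathbb Ef(X_1)g(X_1)$ and $\|\cdot\|_{L^2}$. For $J\subset\{1,\dots,p\}$, $\Pi_J$ is the $\langle\cdot,\cdot\rangle_{L^2}$-orthogonal projection onto $\mathrm{span}\{g_j:j\in J\}$; $\Pi_m=\Pi_{\widehat J_m}$ where $\widehat J_m$ is the (arbitrary) set of $m$ indices selected by orthogonal matching pursuit. (A2): either (i) $\beta^*$ is $s$-sparse: $|\{j:\beta^*_j\ne0\}|\le s$,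 $s\|\beta^*\|_1^2=o(n/\log p)$, $\|f^*\|_{L^2}^2\le C_{f^*}$, $\min_{j:\beta^*_j\ne0}|\beta^*_j|\ge\underline\beta>0$; or (ii) $\beta^*$ is $\gamma$-sparse, $\gamma\in[1,\infty)$: $\|\beta^*\|_2\le C_{\ell^2}$ and $\sum_{j\in J}|\beta^*_j|\le C_\gamma(\sum_{j\in J}|\beta^*_j|^2)^{(\gamma-1)/(2\gamma-1)}$ for all $J$. (A4): $\Gamma=\mathrm{Cov}(X_1)$ with $\lambda_{\min}(\Gamma)\ge c_\lambda>0$ and $\sup_{|J|\le M_n,k\notin J}\|\Gamma_J^{-1}v_k\|_1<C_{\mathrm{Cov}}$, where $\Gamma_J=(\Gamma_{jk})_{j,k\in J}$, $v_k=(\mathrm{Cov}(X_1^{(k)},X_1^{(j)}))_{j\in J}$, $M_n=\sqrt{n/((\overline\sigma^2+\rho^4)\log p)}$ for given parameters $\overline\sigma^2,\rho^2>0$. All constants are fixed, independent of $n$. *)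

theory Defs
  imports "HOL-Probability.Probability"
begin

text \<open>Design vectors are points x :: nat \<Rightarrow> real; only the coordinates 1..p matter.
  The distribution of X_1 (for sample size n) is a probability measure on nat \<Rightarrow> real.\<close>

definition coord :: "nat \<Rightarrow> (nat \<Rightarrow> real) \<Rightarrow> real" where
  "coord j = (\<lambda>x. x j)"

definition emp_inner :: "nat \<Rightarrow> (nat \<Rightarrow> (nat \<Rightarrow> real)) \<Rightarrow> ((nat \<Rightarrow> real) \<Rightarrow> real)
    \<Rightarrow> ((nat \<Rightarrow> real) \<Rightarrow> real) \<Rightarrow> real" where
  "emp_inner n X f g = (\<Sum>i=1..n. f (X i) * g (X i)) / real n"

definition L2_inner :: "(nat \<Rightarrow> real) measure \<Rightarrow> ((nat \<Rightarrow> real) \<Rightarrow> real)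
    \<Rightarrow> ((nat \<Rightarrow> real) \<Rightarrow> real) \<Rightarrow> real" where
  "L2_inner P f g = (\<integral>x. f x * g x \<partial>P)"

definition lin_span :: "nat set \<Rightarrow> ((nat \<Rightarrow> real) \<Rightarrow> real) set" where
  "lin_span J = {h. \<exists>c :: nat \<Rightarrow> real. h = (\<lambda>x. \<Sum>j\<in>J. c j * x j)}"

definition L2_proj :: "(nat \<Rightarrow> real) measure \<Rightarrow> nat set \<Rightarrow> ((nat \<Rightarrow> real) \<Rightarrow> real)
    \<Rightarrow> ((nat \<Rightarrow> real) \<Rightarrow> real)" where
  "L2_proj P J f = (SOME h. h \<in> lin_span J \<and>
      (\<forall>j\<in>J. L2_inner P (\<lambda>x. f x - h x) (coord j) = 0))"

definition cov :: "(nat \<Rightarrow> real) measure \<Rightarrow> nat \<Rightarrow> nat \<Rightarrow> real" where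
  "cov P j k = (\<integral>x. x j * x k \<partial>P) - (\<integral>x. x j \<partial>P) * (\<integral>x. x k \<partial>P)"

text \<open>Gamma_J^{-1} v_k, as a vector supported on J: the (unique, when Gamma_J is
  invertible) solution w of Gamma_J w = v_k.\<close>
definition sub_inv_apply :: "(nat \<Rightarrow> nat \<Rightarrow> real) \<Rightarrow> nat set \<Rightarrow> nat \<Rightarrow> (nat \<Rightarrow> real)" where
  "sub_inv_apply G J k = (THE w. (\<forall>j. j \<notin> J \<longrightarrow> w j = 0) \<and>
      (\<forall>i\<in>J. (\<Sum>j\<in>J. G i j * w j) = G i k))"

definition D_n :: "nat \<Rightarrow> nat \<Rightarrow> (nat \<Rightarrow> (nat \<Rightarrow> real)) \<Rightarrow> (nat \<Rightarrow> real) measure \<Rightarrow> real" where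
  "D_n n p X P = Max ((\<lambda>(j,k). \<bar>emp_inner n X (coord j) (coord k) - L2_inner P (coord j) (coord k)\<bar>)
      ` ({1..p} \<times> {1..p}))"

text \<open>M_n = sqrt(n / ((sigma^2 + rho^4) log p)), with sigma2 = overline sigma^2, rho2 = rho^2.\<close>
definition M_n :: "nat \<Rightarrow> nat \<Rightarrow> real \<Rightarrow> real \<Rightarrow> real" where
  "M_n n p sigma2 rho2 = sqrt (real n / ((sigma2 + rho2 ^ 2) * ln (real p)))"

definition lin_fun :: "nat \<Rightarrow> (nat \<Rightarrow> real) \<Rightarrow> (nat \<Rightarrow> real) \<Rightarrow> real" where
  "lin_fun p b = (\<lambda>x. \<Sum>j=1..p. b j * x j)"

definition A2_i :: "(nat \<Rightarrow> (nat \<Rightarrow> real) measure) \<Rightarrow> (nat \<Rightarrow> nat) \<Rightarrow> (nat \<Rightarrow> nat \<Rightarrow> real)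
    \<Rightarrow> (nat \<Rightarrow> nat) \<Rightarrow> real \<Rightarrow> real \<Rightarrow> bool" where
  "A2_i P p \<beta> s Cf \<beta>low \<longleftrightarrow>
     (\<forall>n. card {j\<in>{1..p n}. \<beta> n j \<noteq> 0} \<le> s n) \<and>
     ((\<lambda>n. real (s n) * (\<Sum>j=1..p n. \<bar>\<beta> n j\<bar>)\<^sup>2 / (real n / ln (real (p n)))) \<longlonglongrightarrow> 0) \<and>
     (\<forall>n. L2_inner (P n) (lin_fun (p n) (\<beta> n)) (lin_fun (p n) (\<beta> n)) \<le> Cf) \<and>
     \<beta>low > 0 \<and> (\<forall>n. \<forall>j\<in>{1..p n}. \<beta> n j \<noteq> 0 \<longrightarrow> \<bar>\<beta> n j\<bar> \<ge> \<beta>low)"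

definition A2_ii :: "(nat \<Rightarrow> nat) \<Rightarrow> (nat \<Rightarrow> nat \<Rightarrow> real) \<Rightarrow> real \<Rightarrow> real \<Rightarrow> real \<Rightarrow> bool" where
  "A2_ii p \<beta> \<gamma> Cl2 C\<gamma> \<longleftrightarrow> \<gamma> \<ge> 1 \<and>
     (\<forall>n. sqrt (\<Sum>j=1..p n. (\<beta> n j)\<^sup>2) \<le> Cl2) \<and>
     (\<forall>n. \<forall>J. J \<subseteq> {1..p n} \<longrightarrow>
        (\<Sum>j\<in>J. \<bar>\<beta> n j\<bar>) \<le> C\<gamma> * (\<Sum>j\<in>J. (\<beta> n j)\<^sup>2) powr ((\<gamma> - 1) / (2 * \<gamma> - 1)))"

definition A4 :: "(nat \<Rightarrow> (nat \<Rightarrow> real) measure) \<Rightarrow> (nat \<Rightarrow> nat) \<Rightarrow> real \<Rightarrow> real \<Rightarrow> real \<Rightarrow> real \<Rightarrow> bool" where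
  "A4 P p clam CCov sigma2 rho2 \<longleftrightarrow> clam > 0 \<and>
     (\<forall>n v. (\<Sum>i=1..p n. \<Sum>j=1..p n. v i * cov (P n) i j * v j) \<ge> clam * (\<Sum>i=1..p n. (v i)\<^sup>2)) \<and>
     (\<forall>n J. J \<subseteq> {1..p n} \<and> real (card J) \<le> M_n n (p n) sigma2 rho2 \<longrightarrow>
        (\<forall>k\<in>{1..p n} - J. (\<Sum>j\<in>J. \<bar>sub_inv_apply (cov (P n)) J k j\<bar>) < CCov))"

end

theory Submission
  imports Defs
begin

text \<open>Write the residual (I - Pi_J) f* as a linear function sum_j b_j x^(j). Its coefficients
  agree with beta* off J, and the normal equations say that Gamma b vanishes on J. For a linear
  function the empirical and population squared norms differ by at most D_n ||b||_1^2, while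
  by (A4) its population squared norm is at least c_lambda ||b||_2^2. Under (A2)(i) at most
  s + |J| coefficients are nonzero, so ||b||_1^2 <= (s + |J|) ||b||_2^2 by Cauchy-Schwarz.
  Under (A2)(ii) the normal equations give b_J = - sum_{k notin J} b_k Gamma_J^{-1} v_k, so (A4)
  yields ||b||_1 <= (1 + C_Cov) ||beta*_{J^c}||_1; gamma-sparsity bounds this by a power of
  ||beta*_{J^c}||_2^2 <= ||b||_2^2 <= ||(I - Pi_J) f*||_{L^2}^2 / c_lambda.\<close>

section \<open>Coercive quadratic forms on finite index sets\<close>

text \<open>coercive_on J G c is the paper's lambda_min(G_J) >= c, without requiring symmetry.\<close>

definition coercive_on :: "nat set \<Rightarrow> (nat \<Rightarrow> nat \<Rightarrow> real) \<Rightarrow> real \<Rightarrow> bool" where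
  "coercive_on J G c \<longleftrightarrow> (\<forall>v. (\<Sum>i\<in>J. \<Sum>j\<in>J. v i * G i j * v j) \<ge> c * (\<Sum>i\<in>J. (v i)\<^sup>2))"

lemma coercive_on_subset:
  assumes "finite A" "J \<subseteq> A" "coercive_on A G c"
  shows "coercive_on J G c"
  unfolding coercive_on_def
proof
  fix v :: "nat \<Rightarrow> real"
  define v' where "v' i = (if i \<in> J then v i else 0)" for i
  have restrict: "(\<Sum>i\<in>A. if i \<in> J then f i else 0) = (\<Sum>i\<in>J. f i)" for f :: "nat \<Rightarrow> real"
    using assms(1,2) by (simp add: sum.inter_restrict[symmetric] Int_absorb1)
  have "(\<Sum>i\<in>A. \<Sum>j\<in>A. v' i * G i j * v' j)
      = (\<Sum>i\<in>A. if i \<in> J then (\<Sum>j\<in>A. if j \<in> J then v i * G i j * v j else 0) else 0)"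
    by (intro sum.cong refl) (auto simp: v'_def intro!: sum.cong)
  also have "\<dots> = (\<Sum>i\<in>J. \<Sum>j\<in>J. v i * G i j * v j)" by (simp add: restrict)
  finally have "(\<Sum>i\<in>A. \<Sum>j\<in>A. v' i * G i j * v' j) = (\<Sum>i\<in>J. \<Sum>j\<in>J. v i * G i j * v j)" .
  moreover have "(\<Sum>i\<in>A. (v' i)\<^sup>2) = (\<Sum>i\<in>J. (v i)\<^sup>2)"
    by (simp add: v'_def if_distrib[of "\<lambda>x. x ^ _"] restrict cong: if_cong)
  moreover have "c * (\<Sum>i\<in>A. (v' i)\<^sup>2) \<le> (\<Sum>i\<in>A. \<Sum>j\<in>A. v' i * G i j * v' j)"
    using assms(3) unfolding coercive_on_def by blast
  ultimately show "(\<Sum>i\<in>J. \<Sum>j\<in>J. v i * G i j * v j) \<ge> c * (\<Sum>i\<in>J. (v i)\<^sup>2)"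
    by simp
qed

lemma coercive_on_diag:
  assumes "coercive_on J G c" "finite J" "a \<in> J"
  shows "c \<le> G a a"
proof -
  define e where "e i = (if i = a then 1 else 0 :: real)" for i
  have "c * (\<Sum>i\<in>J. (e i)\<^sup>2) \<le> (\<Sum>i\<in>J. \<Sum>j\<in>J. e i * G i j * e j)"
    using assms(1) unfolding coercive_on_def by blast
  then show ?thesis using assms(2,3)
    by (simp add: e_def if_distrib[of "\<lambda>x. x * _"] if_distrib[of "\<lambda>x. _ * x"]
        if_distrib[of "\<lambda>x. x ^ _"] cong: if_cong)
qed

lemma quadratic_form_insert:
  fixes G :: "nat \<Rightarrow> nat \<Rightarrow> real"
  assumes "finite J" "a \<notin> J" and sym: "\<forall>i\<in>J. G i a = G a i"
  shows "(\<Sum>i\<in>insert a J. \<Sum>j\<in>insert a J. u i * G i j * u j)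
       = G a a * (u a)\<^sup>2 + 2 * u a * (\<Sum>j\<in>J. G a j * u j) + (\<Sum>i\<in>J. \<Sum>j\<in>J. u i * G i j * u j)"
proof -
  have "(\<Sum>i\<in>J. u i * G i a * u a) = u a * (\<Sum>j\<in>J. G a j * u j)"
    using sym by (simp add: sum_distrib_left mult_ac)
  moreover have "(\<Sum>j\<in>J. u a * G a j * u j) = u a * (\<Sum>j\<in>J. G a j * u j)"
    by (simp add: sum_distrib_left mult_ac)
  ultimately show ?thesis
    using assms(1,2) by (simp add: sum.distrib power2_eq_square algebra_simps)
qed

lemma coercive_on_schur_complement:
  fixes G :: "nat \<Rightarrow> nat \<Rightarrow> real"
  assumes coercive: "coercive_on (insert a J) G c" and "c > 0"
    and "finite J" "a \<notin> J" and sym: "\<forall>i\<in>J. G i a = G a i"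
  shows "coercive_on J (\<lambda>i j. G i j - G i a * G a j / G a a) c"
  unfolding coercive_on_def
proof
  fix v :: "nat \<Rightarrow> real"
  have "G a a > 0" using coercive_on_diag[OF coercive] assms(2,3) by fastforce
  define S where "S = (\<Sum>j\<in>J. G a j * v j)"
  define Q where "Q = (\<Sum>i\<in>J. \<Sum>j\<in>J. v i * G i j * v j)"
  \<comment> \<open>the value at a that minimises the form of G for fixed v on J\<close>
  define u where "u = v(a := - S / G a a)"
  have u_J: "(\<Sum>j\<in>J. G a j * u j) = S" "(\<Sum>i\<in>J. \<Sum>j\<in>J. u i * G i j * u j) = Q"
      "(\<Sum>i\<in>J. (u i)\<^sup>2) = (\<Sum>i\<in>J. (v i)\<^sup>2)"
    using assms(4) unfolding u_def S_def Q_def by (auto intro!: sum.cong)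
  have "(\<Sum>i\<in>insert a J. \<Sum>j\<in>insert a J. u i * G i j * u j) = Q - S\<^sup>2 / G a a"
    unfolding quadratic_form_insert[OF assms(3-5)] u_J
    using \<open>G a a > 0\<close> by (simp add: u_def field_simps power2_eq_square)
  moreover have "(\<Sum>i\<in>J. \<Sum>j\<in>J. v i * (G i j - G i a * G a j / G a a) * v j) = Q - S\<^sup>2 / G a a"
  proof -
    have "(\<Sum>i\<in>J. v i * G i a) = S" unfolding S_def using sym by (intro sum.cong) auto
    then have "(\<Sum>i\<in>J. \<Sum>j\<in>J. (v i * G i a) * (G a j * v j) / G a a) = S\<^sup>2 / G a a"
      unfolding S_def by (simp add: sum_divide_distrib[symmetric] sum_product[symmetric] power2_eq_square)
    then show ?thesis unfolding Q_def by (simp add: algebra_simps sum_subtractf)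
  qed
  moreover have "c * (\<Sum>i\<in>J. (v i)\<^sup>2) \<le> c * (\<Sum>i\<in>insert a J. (u i)\<^sup>2)"
    using u_J(3) assms(2-4) by simp
  moreover have "c * (\<Sum>i\<in>insert a J. (u i)\<^sup>2) \<le> (\<Sum>i\<in>insert a J. \<Sum>j\<in>insert a J. u i * G i j * u j)"
    using coercive unfolding coercive_on_def by blast
  ultimately show "c * (\<Sum>i\<in>J. (v i)\<^sup>2) \<le> (\<Sum>i\<in>J. \<Sum>j\<in>J. v i * (G i j - G i a * G a j / G a a) * v j)"
    by linarith
qed

lemma schur_complement_back_substitution:
  fixes G :: "nat \<Rightarrow> nat \<Rightarrow> real"
  assumes "finite J" "a \<notin> J" "G a a \<noteq> 0"
    and schur_eq: "\<forall>i\<in>J. (\<Sum>j\<in>J. (G i j - G i a * G a j / G a a) * w j) = y i - G i a * y a / G a a"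
  shows "\<forall>i\<in>insert a J. (\<Sum>j\<in>insert a J. G i j * (w(a := (y a - (\<Sum>j\<in>J. G a j * w j)) / G a a)) j) = y i"
proof
  fix i assume i: "i \<in> insert a J"
  define wa where "wa = (y a - (\<Sum>j\<in>J. G a j * w j)) / G a a"
  have "(\<Sum>j\<in>insert a J. G i j * (w(a := wa)) j) = G i a * wa + (\<Sum>j\<in>J. G i j * w j)"
    using assms(1,2) by (auto intro!: sum.cong)
  also have "\<dots> = y i"
  proof (cases "i = a")
    case True then show ?thesis using assms(3) by (simp add: wa_def field_simps)
  next
    case False
    then have "y i - G i a * y a / G a a = (\<Sum>j\<in>J. G i j * w j) - G i a * (\<Sum>j\<in>J. G a j * w j) / G a a"
      using schur_eq i by (simp add: algebra_simps sum_subtractf sum_distrib_left sum_divide_distrib)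
    then show ?thesis using assms(3) by (simp add: wa_def field_simps)
  qed
  finally show "(\<Sum>j\<in>insert a J. G i j * (w(a := wa)) j) = y i" .
qed

text \<open>Gaussian elimination: eliminating one coordinate leaves a coercive Schur complement.\<close>

lemma coercive_on_solvable:
  fixes G :: "nat \<Rightarrow> nat \<Rightarrow> real"
  assumes "finite J" "\<forall>i\<in>J. \<forall>j\<in>J. G i j = G j i" "coercive_on J G c" "c > 0"
  shows "\<exists>w. (\<forall>j. j \<notin> J \<longrightarrow> w j = 0) \<and> (\<forall>i\<in>J. (\<Sum>j\<in>J. G i j * w j) = y i)"
  using assms
proof (induction J arbitrary: G y rule: finite_induct)
  case empty
  then show ?case by (intro exI[of _ "\<lambda>_. 0"]) simp
next
  case (insert a J)
  note sym = insert.prems(1)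
  define G' where "G' i j = G i j - G i a * G a j / G a a" for i j
  define y' where "y' i = y i - G i a * y a / G a a" for i
  have "\<forall>i\<in>J. \<forall>j\<in>J. G' i j = G' j i"
  proof (intro ballI)
    fix i j assume "i \<in> J" "j \<in> J"
    then have "G i j = G j i" "G i a = G a i" "G a j = G j a" using sym by blast+
    then show "G' i j = G' j i" unfolding G'_def by (simp add: mult.commute)
  qed
  moreover have "coercive_on J G' c"
    unfolding G'_def using insert.prems(2,3) insert.hyps(1,2)
    by (rule coercive_on_schur_complement) (use sym in blast)
  ultimately obtain w where w_supp: "\<forall>j. j \<notin> J \<longrightarrow> w j = 0"
      and w_eq: "\<forall>i\<in>J. (\<Sum>j\<in>J. G' i j * w j) = y' i"
    using insert.IH[of G' y'] insert.prems(3) by blast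
  have "G a a \<noteq> 0" using coercive_on_diag[OF insert.prems(2)] insert.prems(3) insert.hyps(1) by fastforce
  show ?case
  proof (intro exI conjI)
    show "\<forall>j. j \<notin> insert a J \<longrightarrow> (w(a := (y a - (\<Sum>j\<in>J. G a j * w j)) / G a a)) j = 0"
      using w_supp by simp
    show "\<forall>i\<in>insert a J. (\<Sum>j\<in>insert a J. G i j * (w(a := (y a - (\<Sum>j\<in>J. G a j * w j)) / G a a)) j) = y i"
      using w_eq unfolding G'_def y'_def
      by (rule schur_complement_back_substitution[where G=G, OF insert.hyps \<open>G a a \<noteq> 0\<close>])
  qed
qed

lemma coercive_on_kernel:
  fixes G :: "nat \<Rightarrow> nat \<Rightarrow> real"
  assumes "finite J" "coercive_on J G c" "c > 0" and kernel: "\<forall>i\<in>J. (\<Sum>j\<in>J. G i j * d j) = 0"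
  shows "\<forall>j\<in>J. d j = 0"
proof -
  have "(\<Sum>i\<in>J. \<Sum>j\<in>J. d i * G i j * d j) = (\<Sum>i\<in>J. d i * (\<Sum>j\<in>J. G i j * d j))"
    by (simp add: sum_distrib_left mult_ac)
  also have "\<dots> = 0" using kernel by simp
  finally have "(\<Sum>i\<in>J. \<Sum>j\<in>J. d i * G i j * d j) = 0" .
  moreover have "c * (\<Sum>i\<in>J. (d i)\<^sup>2) \<le> (\<Sum>i\<in>J. \<Sum>j\<in>J. d i * G i j * d j)"
    using assms(2) unfolding coercive_on_def by blast
  ultimately have "c * (\<Sum>i\<in>J. (d i)\<^sup>2) \<le> 0" by simp
  then have "(\<Sum>i\<in>J. (d i)\<^sup>2) \<le> 0" using assms(3) by (simp add: mult_le_0_iff)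
  then have "(\<Sum>i\<in>J. (d i)\<^sup>2) = 0" by (simp add: order_antisym sum_nonneg)
  then show ?thesis using assms(1) by (simp add: sum_nonneg_eq_0_iff)
qed

lemma sub_inv_apply_solves:
  fixes G :: "nat \<Rightarrow> nat \<Rightarrow> real"
  assumes "finite J" "\<forall>i\<in>J. \<forall>j\<in>J. G i j = G j i" "coercive_on J G c" "c > 0"
  shows "\<forall>i\<in>J. (\<Sum>j\<in>J. G i j * sub_inv_apply G J k j) = G i k"
proof -
  let ?solves = "\<lambda>w. (\<forall>j. j \<notin> J \<longrightarrow> w j = 0) \<and> (\<forall>i\<in>J. (\<Sum>j\<in>J. G i j * w j) = G i k)"
  obtain w where w: "?solves w" using coercive_on_solvable[OF assms, of "\<lambda>i. G i k"] by blast
  have "w' = w" if w': "?solves w'" for w'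
  proof
    fix j
    have "\<forall>i\<in>J. (\<Sum>j\<in>J. G i j * (w' j - w j)) = 0"
    proof
      fix i assume "i \<in> J"
      then show "(\<Sum>j\<in>J. G i j * (w' j - w j)) = 0"
        using w w' by (simp add: right_diff_distrib sum_subtractf)
    qed
    then have "\<forall>j\<in>J. w' j - w j = 0" by (rule coercive_on_kernel[OF assms(1,3,4)])
    then show "w' j = w j" using w w' by (cases "j \<in> J") auto
  qed
  then have "?solves (THE w. ?solves w)" by (rule theI[of ?solves w, OF w])
  then show ?thesis unfolding sub_inv_apply_def by (rule conjunct2)
qed

lemma coercive_on_orthogonal_coeffs:
  fixes G :: "nat \<Rightarrow> nat \<Rightarrow> real"
  assumes J: "J \<subseteq> {1..p}" and sym: "\<forall>i j. G i j = G j i"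
    and coercive: "coercive_on J G c" and "c > 0"
    and orth: "\<forall>i\<in>J. (\<Sum>j=1..p. G i j * b j) = 0"
  shows "\<forall>j\<in>J. b j = - (\<Sum>k\<in>{1..p} - J. b k * sub_inv_apply G J k j)"
proof -
  define K where "K = {1..p} - J"
  define W where "W k = sub_inv_apply G J k" for k
  define u where "u j = b j + (\<Sum>k\<in>K. b k * W k j)" for j
  have finJ: "finite J" using J finite_subset by blast
  have W: "\<forall>i\<in>J. (\<Sum>j\<in>J. G i j * W k j) = G i k" for k
    unfolding W_def using sym by (intro sub_inv_apply_solves[OF finJ _ coercive \<open>c > 0\<close>]) blast
  have split: "(\<Sum>j=1..p. h j) = (\<Sum>j\<in>K. h j) + (\<Sum>j\<in>J. h j)" for h :: "nat \<Rightarrow> real"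
    unfolding K_def using J by (intro sum.subset_diff) auto
  have "\<forall>i\<in>J. (\<Sum>j\<in>J. G i j * u j) = 0"
  proof
    fix i assume i: "i \<in> J"
    have "(\<Sum>j\<in>J. G i j * u j) = (\<Sum>j\<in>J. G i j * b j) + (\<Sum>k\<in>K. b k * (\<Sum>j\<in>J. G i j * W k j))"
      unfolding u_def by (simp add: algebra_simps sum.distrib sum_distrib_left sum.swap[of _ J K])
    also have "\<dots> = (\<Sum>j=1..p. G i j * b j)"
      using W i unfolding split by (simp add: mult.commute)
    finally show "(\<Sum>j\<in>J. G i j * u j) = 0" using orth i by simp
  qed
  then have "\<forall>j\<in>J. u j = 0" by (rule coercive_on_kernel[OF finJ coercive \<open>c > 0\<close>])
  then show ?thesis unfolding u_def K_def W_def by (simp add: eq_neg_iff_add_eq_0)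
qed

lemma coercive_on_orthogonal_l1_bound:
  fixes G :: "nat \<Rightarrow> nat \<Rightarrow> real"
  assumes J: "J \<subseteq> {1..p}" and sym: "\<forall>i j. G i j = G j i"
    and coercive: "coercive_on J G c" and "c > 0"
    and orth: "\<forall>i\<in>J. (\<Sum>j=1..p. G i j * b j) = 0"
    and inv: "\<forall>k\<in>{1..p} - J. (\<Sum>j\<in>J. \<bar>sub_inv_apply G J k j\<bar>) \<le> C"
  shows "(\<Sum>j=1..p. \<bar>b j\<bar>) \<le> (1 + C) * (\<Sum>k\<in>{1..p} - J. \<bar>b k\<bar>)"
proof -
  define K where "K = {1..p} - J"
  define W where "W k = sub_inv_apply G J k" for k
  have "(\<Sum>j\<in>J. \<bar>b j\<bar>) \<le> (\<Sum>j\<in>J. \<Sum>k\<in>K. \<bar>b k\<bar> * \<bar>W k j\<bar>)"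
  proof (rule sum_mono)
    fix j assume "j \<in> J"
    then have "\<bar>b j\<bar> = \<bar>\<Sum>k\<in>K. b k * W k j\<bar>"
      using coercive_on_orthogonal_coeffs[OF J sym coercive \<open>c > 0\<close> orth]
      unfolding K_def W_def by simp
    also have "\<dots> \<le> (\<Sum>k\<in>K. \<bar>b k\<bar> * \<bar>W k j\<bar>)" by (rule order_trans[OF sum_abs]) (simp add: abs_mult)
    finally show "\<bar>b j\<bar> \<le> (\<Sum>k\<in>K. \<bar>b k\<bar> * \<bar>W k j\<bar>)" .
  qed
  also have "\<dots> = (\<Sum>k\<in>K. \<bar>b k\<bar> * (\<Sum>j\<in>J. \<bar>W k j\<bar>))"
    by (simp add: sum_distrib_left sum.swap[of _ J K])
  also have "\<dots> \<le> (\<Sum>k\<in>K. \<bar>b k\<bar> * C)"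
    using inv unfolding K_def W_def by (intro sum_mono mult_left_mono) auto
  also have "\<dots> = C * (\<Sum>k\<in>K. \<bar>b k\<bar>)" by (simp add: sum_distrib_left mult.commute)
  finally have "(\<Sum>j\<in>J. \<bar>b j\<bar>) \<le> C * (\<Sum>k\<in>K. \<bar>b k\<bar>)" .
  moreover have "(\<Sum>j=1..p. \<bar>b j\<bar>) = (\<Sum>k\<in>K. \<bar>b k\<bar>) + (\<Sum>j\<in>J. \<bar>b j\<bar>)"
    unfolding K_def using J by (intro sum.subset_diff) auto
  ultimately show ?thesis unfolding K_def by (simp add: algebra_simps)
qed

lemma sum_abs_squared_le_card_support:
  fixes b :: "'a \<Rightarrow> real"
  assumes "finite A" and "card {j\<in>A. b j \<noteq> 0} \<le> m"
  shows "(\<Sum>j\<in>A. \<bar>b j\<bar>)\<^sup>2 \<le> real m * (\<Sum>j\<in>A. (b j)\<^sup>2)"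
proof -
  define T where "T = {j\<in>A. b j \<noteq> 0}"
  have "(\<Sum>j\<in>A. \<bar>b j\<bar>) = (\<Sum>j\<in>T. \<bar>b j\<bar>)"
    by (rule sum.mono_neutral_right) (auto simp: T_def assms(1))
  also have "\<dots>\<^sup>2 \<le> (\<Sum>j\<in>T. \<bar>b j\<bar>\<^sup>2) * card T" by (rule sum_squared_le_sum_of_squares)
  also have "\<dots> \<le> (\<Sum>j\<in>A. (b j)\<^sup>2) * m"
  proof (rule mult_mono)
    show "(\<Sum>j\<in>T. \<bar>b j\<bar>\<^sup>2) \<le> (\<Sum>j\<in>A. (b j)\<^sup>2)"
      using assms(1) unfolding power2_abs by (intro sum_mono2) (auto simp: T_def)
    show "real (card T) \<le> real m" using assms(2) by (simp add: T_def)
  qed (auto simp: sum_nonneg)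
  finally show ?thesis by (simp add: mult.commute)
qed

section \<open>Inner products of linear functions\<close>

definition L2_gram :: "(nat \<Rightarrow> real) measure \<Rightarrow> nat \<Rightarrow> nat \<Rightarrow> real" where
  "L2_gram P i j = L2_inner P (coord i) (coord j)"

lemma L2_gram_sym: "L2_gram P i j = L2_gram P j i"
  unfolding L2_gram_def L2_inner_def coord_def by (simp add: mult.commute)

lemma cov_eq_L2_gram:
  assumes "\<And>j. (\<integral>x. x j \<partial>P) = 0"
  shows "cov P = L2_gram P"
  using assms by (intro ext) (simp add: cov_def L2_gram_def L2_inner_def coord_def)

lemma integrable_coord_mult:
  fixes P :: "(nat \<Rightarrow> real) measure"
  assumes meas: "\<And>j. (\<lambda>x. x j) \<in> borel_measurable P"
    and sq: "\<And>j. integrable P (\<lambda>x. (x j)\<^sup>2)"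
  shows "integrable P (\<lambda>x. x j * x k)"
proof (rule Bochner_Integration.integrable_bound)
  show "integrable P (\<lambda>x. (x j)\<^sup>2 + (x k)\<^sup>2)" using sq by auto
  show "(\<lambda>x. x j * x k) \<in> borel_measurable P" using meas by auto
  show "AE x in P. norm (x j * x k) \<le> norm ((x j)\<^sup>2 + (x k)\<^sup>2)"
  proof (rule AE_I2)
    fix x :: "nat \<Rightarrow> real"
    have "2 * \<bar>x j\<bar> * \<bar>x k\<bar> \<le> \<bar>x j\<bar>\<^sup>2 + \<bar>x k\<bar>\<^sup>2" by (rule sum_squares_bound)
    moreover have "0 \<le> \<bar>x j\<bar> * \<bar>x k\<bar>" by simp
    ultimately show "norm (x j * x k) \<le> norm ((x j)\<^sup>2 + (x k)\<^sup>2)"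
      unfolding real_norm_def abs_mult power2_abs by linarith
  qed
qed

lemma L2_inner_lincomb:
  assumes meas: "\<And>j. (\<lambda>x. x j) \<in> borel_measurable P"
    and sq: "\<And>j. integrable P (\<lambda>x. (x j)\<^sup>2)"
  shows "L2_inner P (\<lambda>x. \<Sum>j\<in>S. a j * x j) (\<lambda>x. \<Sum>k\<in>T. d k * x k)
       = (\<Sum>j\<in>S. \<Sum>k\<in>T. a j * d k * L2_gram P j k)"
proof -
  have "(\<lambda>x. (\<Sum>j\<in>S. a j * x j) * (\<Sum>k\<in>T. d k * x k))
      = (\<lambda>x. \<Sum>j\<in>S. \<Sum>k\<in>T. a j * d k * (x j * x k))"
    by (simp add: sum_product mult_ac)
  then show ?thesis
    unfolding L2_inner_def L2_gram_def coord_def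
    by (simp add: integrable_coord_mult[OF meas sq])
qed

lemma L2_inner_lincomb_coord:
  assumes meas: "\<And>j. (\<lambda>x. x j) \<in> borel_measurable P"
    and sq: "\<And>j. integrable P (\<lambda>x. (x j)\<^sup>2)"
  shows "L2_inner P (\<lambda>x. \<Sum>j\<in>S. a j * x j) (coord i) = (\<Sum>j\<in>S. L2_gram P i j * a j)"
proof -
  have "L2_inner P (\<lambda>x. \<Sum>j\<in>S. a j * x j) (\<lambda>x. \<Sum>k\<in>{i}. 1 * x k)
      = (\<Sum>j\<in>S. \<Sum>k\<in>{i}. a j * 1 * L2_gram P j k)"
    by (rule L2_inner_lincomb[OF meas sq])
  then show ?thesis unfolding coord_def by (simp add: L2_gram_sym mult.commute)
qed

lemma emp_inner_lincomb:
  "emp_inner n X (\<lambda>x. \<Sum>j\<in>S. a j * x j) (\<lambda>x. \<Sum>k\<in>T. d k * x k)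
     = (\<Sum>j\<in>S. \<Sum>k\<in>T. a j * d k * emp_inner n X (coord j) (coord k))"
proof -
  have "(\<Sum>i=1..n. (\<Sum>j\<in>S. a j * X i j) * (\<Sum>k\<in>T. d k * X i k))
      = (\<Sum>i=1..n. \<Sum>j\<in>S. \<Sum>k\<in>T. a j * d k * (X i j * X i k))"
    by (simp add: sum_product mult_ac)
  also have "\<dots> = (\<Sum>j\<in>S. \<Sum>i=1..n. \<Sum>k\<in>T. a j * d k * (X i j * X i k))" by (rule sum.swap)
  also have "\<dots> = (\<Sum>j\<in>S. \<Sum>k\<in>T. \<Sum>i=1..n. a j * d k * (X i j * X i k))"
    by (rule sum.cong[OF refl]) (rule sum.swap)
  also have "\<dots> = (\<Sum>j\<in>S. \<Sum>k\<in>T. a j * d k * (\<Sum>i=1..n. X i j * X i k))"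
    by (simp add: sum_distrib_left)
  finally show ?thesis
    unfolding emp_inner_def coord_def
    by (simp only: sum_divide_distrib[where A=S] sum_divide_distrib[where A=T] times_divide_eq_right)
qed

lemma coercive_on_L2_inner_lincomb:
  assumes meas: "\<And>j. (\<lambda>x. x j) \<in> borel_measurable P"
    and sq: "\<And>j. integrable P (\<lambda>x. (x j)\<^sup>2)"
    and "coercive_on A (L2_gram P) c"
  shows "c * (\<Sum>j\<in>A. (b j)\<^sup>2) \<le> L2_inner P (\<lambda>x. \<Sum>j\<in>A. b j * x j) (\<lambda>x. \<Sum>j\<in>A. b j * x j)"
  using assms(3) unfolding coercive_on_def L2_inner_lincomb[OF meas sq]
  by (simp add: mult_ac)

lemma lincomb_deviation_le_D_n:
  assumes meas: "\<And>j. (\<lambda>x. x j) \<in> borel_measurable P"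
    and sq: "\<And>j. integrable P (\<lambda>x. (x j)\<^sup>2)"
    and r: "r = (\<lambda>x. \<Sum>j=1..p. b j * x j)"
  shows "\<bar>emp_inner n X r r - L2_inner P r r\<bar> \<le> D_n n p X P * (\<Sum>j=1..p. \<bar>b j\<bar>)\<^sup>2"
proof -
  define E where "E j k = emp_inner n X (coord j) (coord k) - L2_gram P j k" for j k
  define D where "D = D_n n p X P"
  have E_le: "\<bar>E j k\<bar> \<le> D" if "j \<in> {1..p}" "k \<in> {1..p}" for j k
    unfolding D_def D_n_def E_def L2_gram_def by (rule Max_ge) (use that in auto)
  have "\<bar>emp_inner n X r r - L2_inner P r r\<bar> = \<bar>\<Sum>j=1..p. \<Sum>k=1..p. b j * b k * E j k\<bar>"
    unfolding r emp_inner_lincomb L2_inner_lincomb[OF meas sq] E_def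
    by (simp add: sum_subtractf algebra_simps)
  also have "\<dots> \<le> (\<Sum>j=1..p. \<Sum>k=1..p. \<bar>b j * b k * E j k\<bar>)"
    by (rule order_trans[OF sum_abs sum_mono]) (rule sum_abs)
  also have "\<dots> \<le> (\<Sum>j=1..p. \<Sum>k=1..p. \<bar>b j\<bar> * \<bar>b k\<bar> * D)"
    by (intro sum_mono) (auto simp: abs_mult intro!: mult_left_mono E_le)
  also have "\<dots> = D * (\<Sum>j=1..p. \<bar>b j\<bar>)\<^sup>2"
    by (simp add: power2_eq_square sum_product sum_distrib_left mult_ac)
  finally show ?thesis unfolding D_def .
qed

lemma D_n_nonneg:
  assumes "1 \<le> p"
  shows "0 \<le> D_n n p X P"
proof -
  have "\<bar>emp_inner n X (coord 1) (coord 1) - L2_inner P (coord 1) (coord 1)\<bar> \<le> D_n n p X P"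
    unfolding D_n_def by (rule Max_ge) (use assms in auto)
  then show ?thesis by linarith
qed

section \<open>The residual of the L2 projection\<close>

definition L2_resid :: "(nat \<Rightarrow> real) measure \<Rightarrow> nat set \<Rightarrow> ((nat \<Rightarrow> real) \<Rightarrow> real)
    \<Rightarrow> (nat \<Rightarrow> real) \<Rightarrow> real" where
  "L2_resid P J f = (\<lambda>x. f x - L2_proj P J f x)"

lemma L2_resid_lin_fun_coeffs:
  fixes P :: "(nat \<Rightarrow> real) measure" and \<beta> :: "nat \<Rightarrow> real"
  assumes meas: "\<And>j. (\<lambda>x. x j) \<in> borel_measurable P"
    and sq: "\<And>j. integrable P (\<lambda>x. (x j)\<^sup>2)"
    and coercive: "coercive_on J (L2_gram P) c" and "c > 0" and J: "J \<subseteq> {1..p}"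
  obtains b where "L2_resid P J (lin_fun p \<beta>) = (\<lambda>x. \<Sum>j=1..p. b j * x j)"
    and "\<forall>i\<in>J. (\<Sum>j=1..p. L2_gram P i j * b j) = 0"
    and "\<forall>j\<in>{1..p} - J. b j = \<beta> j"
proof -
  define G where "G = L2_gram P"
  define f where "f = lin_fun p \<beta>"
  define resid where "resid a j = \<beta> j - (if j \<in> J then a j else 0)" for a j
  have restrict: "(\<Sum>j=1..p. if j \<in> J then h j else 0) = (\<Sum>j\<in>J. h j)" for h :: "nat \<Rightarrow> real"
    using J by (simp add: sum.inter_restrict[symmetric] Int_absorb1)
  have resid_fun: "(\<lambda>x. f x - (\<Sum>j\<in>J. a j * x j)) = (\<lambda>x. \<Sum>j=1..p. resid a j * x j)" for a
    by (simp add: f_def lin_fun_def resid_def left_diff_distrib sum_subtractf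
        if_distrib[of "\<lambda>z. z * _"] restrict[simplified] cong: if_cong)
  have resid_orth: "L2_inner P (\<lambda>x. f x - (\<Sum>j\<in>J. a j * x j)) (coord i)
      = (\<Sum>j=1..p. G i j * \<beta> j) - (\<Sum>j\<in>J. G i j * a j)" for a i
    unfolding resid_fun L2_inner_lincomb_coord[OF meas sq] G_def
    by (simp add: resid_def right_diff_distrib sum_subtractf
        if_distrib[of "\<lambda>z. _ * z"] restrict[simplified] cong: if_cong)
  obtain w where "\<forall>i\<in>J. (\<Sum>j\<in>J. G i j * w j) = (\<Sum>j=1..p. G i j * \<beta> j)"
    using coercive_on_solvable[of J G c "\<lambda>i. \<Sum>j=1..p. G i j * \<beta> j"] J coercive \<open>c > 0\<close>
    unfolding G_def by (metis L2_gram_sym finite_atLeastAtMost finite_subset)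
  then have "\<exists>h. h \<in> lin_span J \<and> (\<forall>j\<in>J. L2_inner P (\<lambda>x. f x - h x) (coord j) = 0)"
    using resid_orth unfolding lin_span_def by (intro exI[of _ "\<lambda>x. \<Sum>j\<in>J. w j * x j"]) auto
  then have proj: "L2_proj P J f \<in> lin_span J
      \<and> (\<forall>j\<in>J. L2_inner P (\<lambda>x. f x - L2_proj P J f x) (coord j) = 0)"
    unfolding L2_proj_def by (rule someI_ex)
  then obtain a where a: "L2_proj P J f = (\<lambda>x. \<Sum>j\<in>J. a j * x j)"
    unfolding lin_span_def by blast
  show ?thesis
  proof (rule that[of "resid a"])
    show "L2_resid P J (lin_fun p \<beta>) = (\<lambda>x. \<Sum>j=1..p. resid a j * x j)"
      using resid_fun[of a] a unfolding L2_resid_def f_def by simp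
    show "\<forall>i\<in>J. (\<Sum>j=1..p. L2_gram P i j * resid a j) = 0"
    proof
      fix i assume "i \<in> J"
      then have "(\<Sum>j=1..p. G i j * \<beta> j) - (\<Sum>j\<in>J. G i j * a j) = 0"
        using proj resid_orth[of a i] a by simp
      then show "(\<Sum>j=1..p. L2_gram P i j * resid a j) = 0"
        unfolding G_def[symmetric]
        by (simp add: resid_def right_diff_distrib sum_subtractf
            if_distrib[of "\<lambda>z. _ * z"] restrict[simplified] cong: if_cong)
    qed
    show "\<forall>j\<in>{1..p} - J. resid a j = \<beta> j" by (simp add: resid_def)
  qed
qed

lemma L2_resid_lin_fun_bounds:
  fixes P :: "(nat \<Rightarrow> real) measure" and \<beta> :: "nat \<Rightarrow> real"
  assumes meas: "\<And>j. (\<lambda>x. x j) \<in> borel_measurable P"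
    and sq: "\<And>j. integrable P (\<lambda>x. (x j)\<^sup>2)"
    and coercive: "coercive_on {1..p} (L2_gram P) c" and "c > 0" and J: "J \<subseteq> {1..p}"
    and r: "r = L2_resid P J (lin_fun p \<beta>)"
  obtains b where "\<bar>emp_inner n X r r - L2_inner P r r\<bar> \<le> D_n n p X P * (\<Sum>j=1..p. \<bar>b j\<bar>)\<^sup>2"
    and "c * (\<Sum>j=1..p. (b j)\<^sup>2) \<le> L2_inner P r r"
    and "\<forall>i\<in>J. (\<Sum>j=1..p. L2_gram P i j * b j) = 0"
    and "\<forall>j\<in>{1..p} - J. b j = \<beta> j"
proof -
  obtain b where rb: "r = (\<lambda>x. \<Sum>j=1..p. b j * x j)"
      and "\<forall>i\<in>J. (\<Sum>j=1..p. L2_gram P i j * b j) = 0" "\<forall>j\<in>{1..p} - J. b j = \<beta> j"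
    using L2_resid_lin_fun_coeffs[OF meas sq coercive_on_subset[OF _ J coercive] \<open>c > 0\<close> J] r by auto
  moreover note lincomb_deviation_le_D_n[OF meas sq rb, of n X]
  moreover have "c * (\<Sum>j=1..p. (b j)\<^sup>2) \<le> L2_inner P r r"
    unfolding rb by (rule coercive_on_L2_inner_lincomb[OF meas sq coercive])
  ultimately show ?thesis using that by blast
qed

lemma L2_resid_deviation_le_sparse:
  fixes P :: "(nat \<Rightarrow> real) measure" and \<beta> :: "nat \<Rightarrow> real"
  assumes meas: "\<And>j. (\<lambda>x. x j) \<in> borel_measurable P"
    and sq: "\<And>j. integrable P (\<lambda>x. (x j)\<^sup>2)"
    and coercive: "coercive_on {1..p} (L2_gram P) c" and "c > 0" and J: "J \<subseteq> {1..p}" and "1 \<le> p"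
    and sparse: "card {j\<in>{1..p}. \<beta> j \<noteq> 0} \<le> s" and C: "1 / c \<le> C"
    and r: "r = L2_resid P J (lin_fun p \<beta>)"
  shows "\<bar>emp_inner n X r r - L2_inner P r r\<bar> \<le> C * D_n n p X P * (real (s + card J) * L2_inner P r r)"
proof -
  obtain b where dev: "\<bar>emp_inner n X r r - L2_inner P r r\<bar> \<le> D_n n p X P * (\<Sum>j=1..p. \<bar>b j\<bar>)\<^sup>2"
      and norm: "c * (\<Sum>j=1..p. (b j)\<^sup>2) \<le> L2_inner P r r"
      and off_J: "\<forall>j\<in>{1..p} - J. b j = \<beta> j"
    by (rule L2_resid_lin_fun_bounds[OF meas sq coercive \<open>c > 0\<close> J r])
  define L where "L = L2_inner P r r"
  have "card {j\<in>{1..p}. b j \<noteq> 0} \<le> card (J \<union> {j\<in>{1..p}. \<beta> j \<noteq> 0})"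
    using off_J J by (intro card_mono) (auto intro: finite_subset)
  also have "\<dots> \<le> s + card J" using card_Un_le[of J "{j\<in>{1..p}. \<beta> j \<noteq> 0}"] sparse by linarith
  finally have "(\<Sum>j=1..p. \<bar>b j\<bar>)\<^sup>2 \<le> real (s + card J) * (\<Sum>j=1..p. (b j)\<^sup>2)"
    by (rule sum_abs_squared_le_card_support[OF finite_atLeastAtMost])
  also have "\<dots> \<le> real (s + card J) * (C * L)"
  proof (rule mult_left_mono)
    have "0 \<le> L"
      unfolding L_def by (rule order_trans[OF _ norm]) (use \<open>c > 0\<close> in \<open>simp add: sum_nonneg\<close>)
    have "(\<Sum>j=1..p. (b j)\<^sup>2) \<le> L / c"
      using norm \<open>c > 0\<close> unfolding L_def by (simp add: le_divide_eq mult.commute)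
    also have "\<dots> \<le> C * L" using mult_right_mono[OF C \<open>0 \<le> L\<close>] by simp
    finally show "(\<Sum>j=1..p. (b j)\<^sup>2) \<le> C * L" .
  qed simp
  finally have "D_n n p X P * (\<Sum>j=1..p. \<bar>b j\<bar>)\<^sup>2 \<le> D_n n p X P * (real (s + card J) * (C * L))"
    by (intro mult_left_mono D_n_nonneg \<open>1 \<le> p\<close>)
  with dev show ?thesis unfolding L_def by (simp add: mult_ac)
qed

lemma L2_resid_deviation_le_weakly_sparse:
  fixes P :: "(nat \<Rightarrow> real) measure" and \<beta> :: "nat \<Rightarrow> real"
  assumes meas: "\<And>j. (\<lambda>x. x j) \<in> borel_measurable P"
    and sq: "\<And>j. integrable P (\<lambda>x. (x j)\<^sup>2)"
    and coercive: "coercive_on {1..p} (L2_gram P) c" and "c > 0" and J: "J \<subseteq> {1..p}" and "1 \<le> p"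
    and inv: "\<forall>k\<in>{1..p} - J. (\<Sum>j\<in>J. \<bar>sub_inv_apply (L2_gram P) J k j\<bar>) \<le> CCov"
    and "0 \<le> e"
    and weak: "(\<Sum>k\<in>{1..p} - J. \<bar>\<beta> k\<bar>) \<le> C\<gamma> * (\<Sum>k\<in>{1..p} - J. (\<beta> k)\<^sup>2) powr e"
    and C: "(1 + CCov)\<^sup>2 * C\<gamma>\<^sup>2 / c powr (2 * e) \<le> C"
    and r: "r = L2_resid P J (lin_fun p \<beta>)"
  shows "\<bar>emp_inner n X r r - L2_inner P r r\<bar> \<le> C * D_n n p X P * L2_inner P r r powr (2 * e)"
proof -
  obtain b where dev: "\<bar>emp_inner n X r r - L2_inner P r r\<bar> \<le> D_n n p X P * (\<Sum>j=1..p. \<bar>b j\<bar>)\<^sup>2"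
      and norm: "c * (\<Sum>j=1..p. (b j)\<^sup>2) \<le> L2_inner P r r"
      and orth: "\<forall>i\<in>J. (\<Sum>j=1..p. L2_gram P i j * b j) = 0"
      and off_J: "\<forall>j\<in>{1..p} - J. b j = \<beta> j"
    by (rule L2_resid_lin_fun_bounds[OF meas sq coercive \<open>c > 0\<close> J r])
  define K where "K = {1..p} - J"
  define L where "L = L2_inner P r r"
  define S where "S = (\<Sum>k\<in>K. (\<beta> k)\<^sup>2)"
  have "0 \<le> L"
    unfolding L_def by (rule order_trans[OF _ norm]) (use \<open>c > 0\<close> in \<open>simp add: sum_nonneg\<close>)
  have "S = (\<Sum>k\<in>K. (b k)\<^sup>2)" unfolding S_def K_def using off_J by simp
  also have "\<dots> \<le> (\<Sum>k=1..p. (b k)\<^sup>2)" unfolding K_def by (intro sum_mono2) auto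
  also have "\<dots> \<le> L / c" using norm \<open>c > 0\<close> unfolding L_def by (simp add: le_divide_eq mult.commute)
  finally have S_le: "S \<le> L / c" .
  have "(\<Sum>j=1..p. \<bar>b j\<bar>) \<le> (1 + CCov) * (\<Sum>k\<in>K. \<bar>b k\<bar>)"
    unfolding K_def using L2_gram_sym coercive_on_subset[OF _ J coercive] \<open>c > 0\<close> orth inv
    by (intro coercive_on_orthogonal_l1_bound[OF J]) auto
  also have "\<dots> = (1 + CCov) * (\<Sum>k\<in>K. \<bar>\<beta> k\<bar>)" unfolding K_def using off_J by simp
  finally have "(\<Sum>j=1..p. \<bar>b j\<bar>)\<^sup>2 \<le> ((1 + CCov) * (\<Sum>k\<in>K. \<bar>\<beta> k\<bar>))\<^sup>2"
    by (intro power_mono) (auto intro: sum_nonneg)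
  also have "\<dots> = (1 + CCov)\<^sup>2 * (\<Sum>k\<in>K. \<bar>\<beta> k\<bar>)\<^sup>2" by (simp add: power_mult_distrib)
  also have "\<dots> \<le> (1 + CCov)\<^sup>2 * (C\<gamma> * S powr e)\<^sup>2"
    using weak unfolding K_def S_def
    by (intro mult_left_mono power_mono) (auto intro: sum_nonneg)
  also have "\<dots> = (1 + CCov)\<^sup>2 * C\<gamma>\<^sup>2 * S powr (2 * e)"
    by (cases "S = 0") (simp_all add: power_mult_distrib powr_power mult_ac)
  also have "\<dots> \<le> (1 + CCov)\<^sup>2 * C\<gamma>\<^sup>2 * (L / c) powr (2 * e)"
    using S_le \<open>0 \<le> e\<close> unfolding S_def by (intro mult_left_mono powr_mono2) (auto intro: sum_nonneg)
  also have "\<dots> = (1 + CCov)\<^sup>2 * C\<gamma>\<^sup>2 / c powr (2 * e) * L powr (2 * e)"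
    using \<open>0 \<le> L\<close> \<open>c > 0\<close> by (simp add: powr_divide)
  also have "\<dots> \<le> C * L powr (2 * e)" using C by (intro mult_right_mono) auto
  finally have "D_n n p X P * (\<Sum>j=1..p. \<bar>b j\<bar>)\<^sup>2 \<le> D_n n p X P * (C * L powr (2 * e))"
    by (intro mult_left_mono D_n_nonneg \<open>1 \<le> p\<close>)
  with dev show ?thesis unfolding L_def by (simp add: mult_ac)
qed

lemma L2_resid_deviation_le_A2:
  fixes P :: "nat \<Rightarrow> (nat \<Rightarrow> real) measure" and \<beta> :: "nat \<Rightarrow> nat \<Rightarrow> real"
  assumes meas: "\<And>j. (\<lambda>x. x j) \<in> borel_measurable (P n)"
    and sq: "\<And>j. integrable (P n) (\<lambda>x. (x j)\<^sup>2)"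
    and coercive: "coercive_on {1..p n} (L2_gram (P n)) c" and "c > 0"
    and J: "J \<subseteq> {1..p n}" and "1 \<le> p n"
    and inv: "\<forall>k\<in>{1..p n} - J. (\<Sum>j\<in>J. \<bar>sub_inv_apply (L2_gram (P n)) J k j\<bar>) \<le> CCov"
    and C: "1 / c \<le> C" "(1 + CCov)\<^sup>2 * C\<gamma>\<^sup>2 / c powr (2 * ((\<gamma> - 1) / (2 * \<gamma> - 1))) \<le> C"
    and r: "r = L2_resid (P n) J (lin_fun (p n) (\<beta> n))"
  shows "(A2_i P p \<beta> s Cf \<beta>low \<longrightarrow> \<bar>emp_inner n (X n) r r - L2_inner (P n) r r\<bar>
            \<le> C * D_n n (p n) (X n) (P n) * (real (s n + card J) * L2_inner (P n) r r)) \<and>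
    (A2_ii p \<beta> \<gamma> Cl2 C\<gamma> \<longrightarrow> \<bar>emp_inner n (X n) r r - L2_inner (P n) r r\<bar>
            \<le> C * D_n n (p n) (X n) (P n) * L2_inner (P n) r r powr ((2 * \<gamma> - 2) / (2 * \<gamma> - 1)))"
proof (intro conjI impI)
  assume "A2_i P p \<beta> s Cf \<beta>low"
  then have "card {j\<in>{1..p n}. \<beta> n j \<noteq> 0} \<le> s n" unfolding A2_i_def by blast
  then show "\<bar>emp_inner n (X n) r r - L2_inner (P n) r r\<bar>
      \<le> C * D_n n (p n) (X n) (P n) * (real (s n + card J) * L2_inner (P n) r r)"
    by (rule L2_resid_deviation_le_sparse[OF meas sq coercive \<open>c > 0\<close> J \<open>1 \<le> p n\<close> _ C(1) r])
next
  define e where "e = (\<gamma> - 1) / (2 * \<gamma> - 1)"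
  assume A2_ii: "A2_ii p \<beta> \<gamma> Cl2 C\<gamma>"
  then have "2 * e = (2 * \<gamma> - 2) / (2 * \<gamma> - 1)" and "0 \<le> e"
    unfolding A2_ii_def e_def by (auto simp: field_simps)
  moreover have "(\<Sum>k\<in>{1..p n} - J. \<bar>\<beta> n k\<bar>) \<le> C\<gamma> * (\<Sum>k\<in>{1..p n} - J. (\<beta> n k)\<^sup>2) powr e"
    using A2_ii unfolding A2_ii_def e_def by blast
  ultimately show "\<bar>emp_inner n (X n) r r - L2_inner (P n) r r\<bar>
      \<le> C * D_n n (p n) (X n) (P n) * L2_inner (P n) r r powr ((2 * \<gamma> - 2) / (2 * \<gamma> - 1))"
    using L2_resid_deviation_le_weakly_sparse[OF meas sq coercive \<open>c > 0\<close> J \<open>1 \<le> p n\<close> inv _ _ C(2)[folded e_def] r]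
    by simp
qed

theorem proposition2p6:
  fixes P :: "nat \<Rightarrow> (nat \<Rightarrow> real) measure"
    and X :: "nat \<Rightarrow> nat \<Rightarrow> (nat \<Rightarrow> real)"
    and p :: "nat \<Rightarrow> nat"
    and \<beta> :: "nat \<Rightarrow> nat \<Rightarrow> real"
    and s :: "nat \<Rightarrow> nat"
    and Cf \<beta>low \<gamma> Cl2 C\<gamma> clam CCov sigma2 rho2 :: real
  assumes prob: "\<And>n. prob_space (P n)"
    and meas: "\<And>n j. (\<lambda>x. x j) \<in> borel_measurable (P n)"
    and sq_int: "\<And>n j. integrable (P n) (\<lambda>x. (x j)\<^sup>2)"
    and centered: "\<And>n j. (\<integral>x. x j \<partial>P n) = 0"
    and p_inf: "filterlim p at_top sequentially"
    and logp: "(\<lambda>n. ln (real (p n)) / real n) \<longlonglongrightarrow> 0"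
    and sigma2_pos: "sigma2 > 0" and rho2_pos: "rho2 > 0"
    and A2: "A2_i P p \<beta> s Cf \<beta>low \<or> A2_ii p \<beta> \<gamma> Cl2 C\<gamma>"
    and A4: "A4 P p clam CCov sigma2 rho2"
  shows "\<exists>C>0. \<forall>\<^sub>F n in sequentially. \<forall>J. J \<subseteq> {1..p n} \<and> real (card J) \<le> M_n n (p n) sigma2 rho2 \<longrightarrow>
     (let f = lin_fun (p n) (\<beta> n);
          r = (\<lambda>x. f x - L2_proj (P n) J f x);
          dev = \<bar>emp_inner n (X n) r r - L2_inner (P n) r r\<bar>;
          D = D_n n (p n) (X n) (P n)
      in (A2_i P p \<beta> s Cf \<beta>low \<longrightarrow>
            dev \<le> C * D * (real (s n + card J) * L2_inner (P n) r r)) \<and>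
         (A2_ii p \<beta> \<gamma> Cl2 C\<gamma> \<longrightarrow>
            dev \<le> C * D * (L2_inner (P n) r r) powr ((2 * \<gamma> - 2) / (2 * \<gamma> - 1))))"
proof -
  have A4_gram: "clam > 0 \<and> (\<forall>n. coercive_on {1..p n} (L2_gram (P n)) clam) \<and>
      (\<forall>n J. J \<subseteq> {1..p n} \<and> real (card J) \<le> M_n n (p n) sigma2 rho2 \<longrightarrow>
        (\<forall>k\<in>{1..p n} - J. (\<Sum>j\<in>J. \<bar>sub_inv_apply (L2_gram (P n)) J k j\<bar>) < CCov))"
    using A4 unfolding A4_def coercive_on_def cov_eq_L2_gram[OF centered] .
  then have clam: "clam > 0" and coercive: "\<And>n. coercive_on {1..p n} (L2_gram (P n)) clam"
    and inv: "\<And>n J. J \<subseteq> {1..p n} \<Longrightarrow> real (card J) \<le> M_n n (p n) sigma2 rho2 \<Longrightarrow>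
      \<forall>k\<in>{1..p n} - J. (\<Sum>j\<in>J. \<bar>sub_inv_apply (L2_gram (P n)) J k j\<bar>) \<le> CCov"
    by (auto intro: less_imp_le)
  define C where "C = 1 / clam + (1 + CCov)\<^sup>2 * C\<gamma>\<^sup>2 / clam powr (2 * ((\<gamma> - 1) / (2 * \<gamma> - 1)))"
  have C_ge: "1 / clam \<le> C" "(1 + CCov)\<^sup>2 * C\<gamma>\<^sup>2 / clam powr (2 * ((\<gamma> - 1) / (2 * \<gamma> - 1))) \<le> C"
    unfolding C_def using clam by simp_all
  moreover have "0 < 1 / clam" using clam by simp
  ultimately have "C > 0" by linarith
  \<comment> \<open>D_n is a maximum over {1..p} x {1..p}, unspecified for p = 0; hence "eventually".\<close>
  have "\<forall>\<^sub>F n in sequentially. 1 \<le> p n" using p_inf by (simp add: filterlim_at_top)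
  then show ?thesis
    unfolding Let_def L2_resid_def[symmetric] using \<open>C > 0\<close>
      L2_resid_deviation_le_A2[where P=P and p=p and \<beta>=\<beta> and X=X, OF meas sq_int coercive clam _ _ inv C_ge refl]
    by (intro exI[of _ C]) (auto elim!: eventually_mono)
qed

end
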